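(* Let $l\ge2$ be an integer and $\varepsilon>0$. Then, as $n\to\infty$, $$\sum_{1\le i\le n}\ \sum_{\substack{d_1,d_2\ge1,\ d_1d_2\le i\\ d_1\mid i,\ d_2\mid i+1\\ \gcd(d_1,d_2)=1}}\frac{\mu(d_1)\mu(d_2)}{(d_1d_2)^{l-1}}=n\prod_p\Big(1-\frac{2}{p^l}\Big)+O_{l,\varepsilon}(n^{\varepsilon}),$$ where $\mu$ is the Möbius function and $p$ runs over all primes. *)

theory Defs
  imports "HOL-Analysis.Analysis" "HOL-Computational_Algebra.Squarefree"
    "HOL-Library.Landau_Symbols"
begin

definition moebius_mu :: "nat \<Rightarrow> int" where
  "moebius_mu n = (if n = 0 then 0
     else if squarefree n then (-1) ^ card (prime_factors n) else 0)"

end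

theory Submission
  imports Defs "HOL-Number_Theory.Cong"
begin

text \<open>
  Swapping the two summations turns the sum into
  \<open>\<Sum>\<close> over coprime \<open>d1 d2 \<le> n\<close> of \<open>\<mu>(d1) \<mu>(d2) / (d1 d2)^(l-1)\<close> times the number of
  \<open>i \<le> n\<close> with \<open>d1 d2 \<le> i\<close>, \<open>d1 | i\<close> and \<open>d2 | i + 1\<close>. By the Chinese remainder theorem
  these \<open>i\<close> form one residue class modulo \<open>d1 d2\<close>, so the count is \<open>n / (d1 d2) + O(1)\<close>.
  The resulting main term \<open>n \<Sum> \<mu>(d1) \<mu>(d2) / (d1 d2)^l\<close>, once completed to all coprime
  squarefree pairs, is \<open>n\<close> times the Euler product: expanding
  \<open>\<Prod>\<^sub>p (1 + 2 (-1/p^l))\<close> gives one term per pair of disjoint sets of primes.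
  Both the \<open>O(1)\<close> errors and the completion tail are bounded by Rankin's trick,
  \<open>(d1 d2)^(-(l-1)) \<le> n^\<delta> (d1 d2)^(-1-\<delta>)\<close> below \<open>n\<close> and
  \<open>(d1 d2)^(-l) \<le> n^(\<delta>-1) (d1 d2)^(-1-\<delta>)\<close> above \<open>n\<close>, against
  \<open>\<Sum> (d1 d2)^(-1-\<delta>) \<le> \<zeta>(1+\<delta>)^2\<close>. The Euler product is reached through its
  truncations to primes \<open>\<le> N\<close> with \<open>N \<ge> n\<close>, for which the completion is a finite sum,
  and the bound passes to the limit \<open>N \<rightarrow> \<infinity>\<close>.
\<close>

section \<open>Counting solutions of the divisibility conditions\<close>

lemma coprime_dvd_and_dvd_Suc_iff_mod_eq:
  fixes d1 d2 :: nat
  assumes "coprime d1 d2" and "d1 \<ge> 1" and "d2 \<ge> 1"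
  obtains r where "r < d1 * d2" and "\<And>i. d1 dvd i \<and> d2 dvd i + 1 \<longleftrightarrow> i mod (d1 * d2) = r"
proof -
  obtain x where x1: "[x = 0] (mod d1)" and x2: "[x = d2 - 1] (mod d2)"
    using binary_chinese_remainder_nat[OF assms(1)] by blast
  have "[x + 1 = d2 - 1 + 1] (mod d2)"
    using x2 by (rule cong_add) simp
  then have "d2 dvd x + 1"
    using cong_dvd_iff assms(3) by fastforce
  then have x2': "[x + 1 = 0] (mod d2)"
    by (simp add: cong_0_iff)
  have "d1 dvd i \<and> d2 dvd i + 1 \<longleftrightarrow> [i = x] (mod d1 * d2)" for i
  proof -
    have "d1 dvd i \<longleftrightarrow> [i = x] (mod d1)"
      using x1 by (metis cong_0_iff cong_sym cong_trans)
    moreover have "d2 dvd i + 1 \<longleftrightarrow> [i = x] (mod d2)"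
      using x2' by (metis cong_0_iff cong_add_rcancel_nat cong_sym cong_trans)
    ultimately show ?thesis
      using assms(1) by (metis coprime_cong_mult_nat cong_modulus_mult_nat mult.commute)
  qed
  moreover have "0 < d1 * d2"
    using assms(2,3) by simp
  ultimately show ?thesis
    using that[of "x mod (d1 * d2)"] unfolding cong_def by simp
qed

lemma card_residue_class_atLeast_modulus:
  fixes m r n :: nat
  assumes "r < m"
  shows "card {i\<in>{1..n}. m \<le> i \<and> i mod m = r} = (n - r) div m"
proof -
  have m: "0 < m"
    using assms by simp
  have "{i\<in>{1..n}. m \<le> i \<and> i mod m = r} = (\<lambda>k. k * m + r) ` {1..(n - r) div m}"
  proof (intro equalityI subsetI)
    fix i assume "i \<in> {i\<in>{1..n}. m \<le> i \<and> i mod m = r}"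
    then have i: "i \<le> n" "m \<le> i" "i mod m = r"
      by auto
    have i_eq: "i = i div m * m + r"
      using i(3) div_mult_mod_eq[of i m] by simp
    have "1 \<le> i div m"
      using i(2) m by (simp add: Suc_le_eq div_greater_zero_iff)
    moreover have "i div m * m \<le> n - r"
      using i_eq i(1) by linarith
    then have "i div m \<le> (n - r) div m"
      using m by (simp add: less_eq_div_iff_mult_less_eq)
    ultimately show "i \<in> (\<lambda>k. k * m + r) ` {1..(n - r) div m}"
      using i_eq by (intro image_eqI[where x = "i div m"]) auto
  next
    fix i assume "i \<in> (\<lambda>k. k * m + r) ` {1..(n - r) div m}"
    then obtain k where k: "1 \<le> k" "k \<le> (n - r) div m" and i_eq: "i = k * m + r"
      by auto
    have "k * m \<le> n - r"
      using k(2) m by (simp add: less_eq_div_iff_mult_less_eq)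
    moreover have "m \<le> k * m"
      using k(1) by simp
    ultimately have "m \<le> i" "i \<le> n"
      using i_eq m by linarith+
    then show "i \<in> {i\<in>{1..n}. m \<le> i \<and> i mod m = r}"
      using assms i_eq m by auto
  qed
  moreover have "inj_on (\<lambda>k. k * m + r) {1..(n - r) div m}"
    using m by (auto simp: inj_on_def)
  ultimately show ?thesis
    by (simp add: card_image)
qed

lemma abs_of_nat_diff_div_minus_divide_le_2:
  fixes m r n :: nat
  assumes "r < m"
  shows "\<bar>real ((n - r) div m) - real n / real m\<bar> \<le> 2"
proof -
  define q where "q = (n - r) div m"
  have "q * m \<le> n - r"
    unfolding q_def by (rule div_times_less_eq_dividend)
  moreover have "n - r < q * m + m"
    unfolding q_def using assms div_mult_mod_eq[of "n - r" m] mod_less_divisor[of m "n - r"]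
    by linarith
  ultimately have "real q * real m \<le> real n" "real n < (real q + 2) * real m"
    using assms by (simp_all flip: of_nat_mult) (simp add: distrib_right flip: of_nat_mult)
  then show ?thesis
    using assms unfolding q_def by (simp add: field_simps abs_le_iff)
qed

definition consecutive_divisor_count :: "nat \<Rightarrow> nat \<Rightarrow> nat \<Rightarrow> nat" where
  "consecutive_divisor_count n d1 d2 = card {i\<in>{1..n}. d1 * d2 \<le> i \<and> d1 dvd i \<and> d2 dvd i + 1}"

lemma abs_consecutive_divisor_count_minus_le_2:
  assumes "coprime d1 d2" and "d1 \<ge> 1" and "d2 \<ge> 1"
  shows "\<bar>real (consecutive_divisor_count n d1 d2) - real n / real (d1 * d2)\<bar> \<le> 2"
proof -
  obtain r where r: "r < d1 * d2" and iff: "\<And>i. d1 dvd i \<and> d2 dvd i + 1 \<longleftrightarrow> i mod (d1 * d2) = r"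
    using coprime_dvd_and_dvd_Suc_iff_mod_eq[OF assms] by blast
  have "consecutive_divisor_count n d1 d2 = (n - r) div (d1 * d2)"
    unfolding consecutive_divisor_count_def iff by (rule card_residue_class_atLeast_modulus[OF r])
  then show ?thesis
    using abs_of_nat_diff_div_minus_divide_le_2[OF r] by simp
qed

definition coprime_pairs_upto :: "nat \<Rightarrow> (nat \<times> nat) set" where
  "coprime_pairs_upto n = {(d1, d2). d1 \<ge> 1 \<and> d2 \<ge> 1 \<and> d1 * d2 \<le> n \<and> coprime d1 d2}"

lemma factors_le_if_mult_le:
  fixes d1 d2 n :: nat
  assumes "d1 \<ge> 1" and "d2 \<ge> 1" and "d1 * d2 \<le> n"
  shows "d1 \<le> n" and "d2 \<le> n"
proof -
  have "d1 * 1 \<le> d1 * d2" "1 * d2 \<le> d1 * d2"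
    using assms(1,2) by (intro mult_le_mono order_refl; simp)+
  then show "d1 \<le> n" and "d2 \<le> n"
    using assms(3) by linarith+
qed

lemma finite_coprime_pairs_upto: "finite (coprime_pairs_upto n)"
proof (rule finite_subset)
  show "coprime_pairs_upto n \<subseteq> {..n} \<times> {..n}"
  proof (rule subrelI)
    fix d1 d2 assume "(d1, d2) \<in> coprime_pairs_upto n"
    then have d: "d1 \<ge> 1" "d2 \<ge> 1" "d1 * d2 \<le> n"
      by (auto simp: coprime_pairs_upto_def)
    show "(d1, d2) \<in> {..n} \<times> {..n}"
      using factors_le_if_mult_le[OF d] by simp
  qed
qed simp

lemma sum_consecutive_divisor_pairs_swap:
  fixes f :: "nat \<Rightarrow> nat \<Rightarrow> 'a::comm_semiring_1"
  shows "(\<Sum>i\<in>{1..n}. \<Sum>(d1, d2)\<in>{(d1, d2). d1 \<ge> 1 \<and> d2 \<ge> 1 \<and> d1 * d2 \<le> i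
            \<and> d1 dvd i \<and> d2 dvd (i + 1) \<and> coprime d1 d2}. f d1 d2)
    = (\<Sum>(d1, d2)\<in>coprime_pairs_upto n. of_nat (consecutive_divisor_count n d1 d2) * f d1 d2)"
proof -
  let ?R = "\<lambda>i (d1, d2). d1 * d2 \<le> i \<and> d1 dvd i \<and> d2 dvd i + 1"
  have "(\<Sum>i\<in>{1..n}. \<Sum>(d1, d2)\<in>{(d1, d2). d1 \<ge> 1 \<and> d2 \<ge> 1 \<and> d1 * d2 \<le> i
            \<and> d1 dvd i \<and> d2 dvd (i + 1) \<and> coprime d1 d2}. f d1 d2)
      = (\<Sum>i\<in>{1..n}. \<Sum>d\<in>{d. d \<in> coprime_pairs_upto n \<and> ?R i d}. case_prod f d)"
    by (intro sum.cong refl arg_cong2[where f = sum]) (auto simp: coprime_pairs_upto_def)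
  also have "\<dots> = (\<Sum>d\<in>coprime_pairs_upto n. \<Sum>i\<in>{i. i \<in> {1..n} \<and> ?R i d}. case_prod f d)"
    by (rule sum.swap_restrict) (simp_all add: finite_coprime_pairs_upto)
  also have "\<dots> = (\<Sum>(d1, d2)\<in>coprime_pairs_upto n. of_nat (consecutive_divisor_count n d1 d2) * f d1 d2)"
    by (intro sum.cong refl) (auto simp: consecutive_divisor_count_def)
  finally show ?thesis .
qed

section \<open>Truncated Euler products as sums over coprime squarefree pairs\<close>

lemma prod_primes_pos:
  fixes B :: "nat set"
  assumes "\<forall>p\<in>B. prime p"
  shows "\<Prod>B > 0"
  using assms by (metis gr0I not_prime_0 prod_zero_iff prod.infinite zero_neq_one)

lemma prime_factors_prod_primes:
  fixes B :: "nat set"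
  assumes "finite B" and "\<forall>p\<in>B. prime p"
  shows "prime_factors (\<Prod>B) = B"
proof -
  have "prime_factors (prod id B) = \<Union>((prime_factors \<circ> id) ` B)"
    using assms by (intro prime_factors_prod) auto
  also have "\<dots> = B"
    using assms(2) by (auto simp: prime_prime_factors)
  finally show ?thesis
    by simp
qed

lemma squarefree_prod_primes:
  fixes B :: "nat set"
  assumes "\<forall>p\<in>B. prime p"
  shows "squarefree (\<Prod>B)"
proof -
  have "squarefree (prod id B)"
    using assms by (intro squarefree_prod_coprime) (auto intro: primes_coprime squarefree_prime)
  then show ?thesis
    by simp
qed

lemma coprime_prod_primes_if_disjoint:
  fixes B1 B2 :: "nat set"
  assumes "\<forall>p\<in>B1 \<union> B2. prime p" and "B1 \<inter> B2 = {}"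
  shows "coprime (\<Prod>B1) (\<Prod>B2)"
proof -
  have "coprime (prod id B1) (prod id B2)"
    using assms by (intro prod_coprime_left prod_coprime_right) (auto intro: primes_coprime)
  then show ?thesis
    by simp
qed

lemma prime_factors_disjoint_if_coprime:
  fixes d1 d2 :: nat
  assumes "coprime d1 d2"
  shows "prime_factors d1 \<inter> prime_factors d2 = {}"
proof (rule ccontr)
  assume "prime_factors d1 \<inter> prime_factors d2 \<noteq> {}"
  then obtain p where "prime p" "p dvd d1" "p dvd d2"
    by (auto simp: in_prime_factors_iff)
  then show False
    using assms coprime_common_divisor not_prime_unit by blast
qed

lemma prod_prime_factors_squarefree:
  fixes d :: nat
  assumes "squarefree d"
  shows "\<Prod>(prime_factors d) = d"
proof -
  have d: "d \<noteq> 0"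
    using assms by (metis not_squarefree_0)
  have "(\<Prod>p\<in>prime_factors d. p ^ multiplicity p d) = d"
    using prod_prime_factors[OF d] by simp
  moreover have "multiplicity p d = 1" if "p \<in> prime_factors d" for p
    using that assms squarefree_factorial_semiring'[OF d] by blast
  ultimately show ?thesis
    by simp
qed

lemma moebius_mu_prod_primes:
  fixes B :: "nat set"
  assumes "finite B" and "\<forall>p\<in>B. prime p"
  shows "moebius_mu (\<Prod>B) = (-1) ^ card B"
  using prod_primes_pos[OF assms(2)] squarefree_prod_primes[OF assms(2)]
    prime_factors_prod_primes[OF assms] by (simp add: moebius_mu_def)

lemma abs_moebius_mu_le_1: "\<bar>moebius_mu d\<bar> \<le> 1"
  by (simp add: moebius_mu_def)

lemma squarefree_if_moebius_mu_nonzero: "moebius_mu d \<noteq> 0 \<Longrightarrow> squarefree d"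
  by (auto simp: moebius_mu_def split: if_splits)

definition moebius_pair_weight :: "nat \<Rightarrow> nat \<Rightarrow> nat \<Rightarrow> real" where
  "moebius_pair_weight k d1 d2 = real_of_int (moebius_mu d1 * moebius_mu d2) / real (d1 * d2) ^ k"

lemma abs_moebius_pair_weight_le: "\<bar>moebius_pair_weight k d1 d2\<bar> \<le> 1 / real (d1 * d2) ^ k"
proof -
  have "\<bar>moebius_mu d1 * moebius_mu d2\<bar> \<le> 1"
    unfolding abs_mult using abs_moebius_mu_le_1[of d1] abs_moebius_mu_le_1[of d2]
    by (simp add: mult_le_one)
  then have "\<bar>real_of_int (moebius_mu d1 * moebius_mu d2)\<bar> \<le> 1"
    by linarith
  then show ?thesis
    unfolding moebius_pair_weight_def abs_divide by (simp add: divide_right_mono)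
qed

lemma moebius_pair_weight_Suc:
  "moebius_pair_weight (Suc k) d1 d2 = moebius_pair_weight k d1 d2 / real (d1 * d2)"
  by (simp add: moebius_pair_weight_def)

lemma moebius_mu_div_power_prod_primes:
  fixes B :: "nat set"
  assumes "finite B" and "\<forall>p\<in>B. prime p"
  shows "real_of_int (moebius_mu (\<Prod>B)) / real (\<Prod>B) ^ k = (\<Prod>p\<in>B. - 1 / real p ^ k)"
  unfolding moebius_mu_prod_primes[OF assms] prod_dividef by (simp add: prod_power_distrib)

lemma moebius_pair_weight_prod_primes:
  fixes B1 B2 :: "nat set"
  assumes "finite B1" and "\<forall>p\<in>B1. prime p" and "finite B2" and "\<forall>p\<in>B2. prime p"
  shows "moebius_pair_weight k (\<Prod>B1) (\<Prod>B2) = (\<Prod>p\<in>B1. - 1 / real p ^ k) * (\<Prod>p\<in>B2. - 1 / real p ^ k)"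
proof -
  have "moebius_pair_weight k (\<Prod>B1) (\<Prod>B2)
      = real_of_int (moebius_mu (\<Prod>B1)) / real (\<Prod>B1) ^ k
        * (real_of_int (moebius_mu (\<Prod>B2)) / real (\<Prod>B2) ^ k)"
    by (simp only: moebius_pair_weight_def of_int_mult of_nat_mult power_mult_distrib
        times_divide_times_eq)
  then show ?thesis
    unfolding moebius_mu_div_power_prod_primes[OF assms(1,2)] moebius_mu_div_power_prod_primes[OF assms(3,4)] .
qed

definition disjoint_subset_pairs :: "'a set \<Rightarrow> ('a set \<times> 'a set) set" where
  "disjoint_subset_pairs A = {(B1, B2). B1 \<subseteq> A \<and> B2 \<subseteq> A \<and> B1 \<inter> B2 = {}}"

lemma finite_disjoint_subset_pairs: "finite A \<Longrightarrow> finite (disjoint_subset_pairs A)"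
  by (rule finite_subset[of _ "Pow A \<times> Pow A"]) (auto simp: disjoint_subset_pairs_def)

lemma prod_one_plus_double_eq_sum_disjoint_subset_pairs:
  fixes f :: "'a \<Rightarrow> 'b::comm_semiring_1"
  assumes "finite A"
  shows "(\<Prod>x\<in>A. 1 + 2 * f x) = (\<Sum>(B1, B2)\<in>disjoint_subset_pairs A. prod f B1 * prod f B2)"
proof -
  have fin: "finite X" if "X \<in> Pow A" for X
    using that assms finite_subset by blast
  have "(\<Prod>x\<in>A. 1 + 2 * f x) = (\<Prod>x\<in>A. (f x + f x) + 1)"
    by (simp add: mult_2 add.commute)
  also have "\<dots> = (\<Sum>X\<in>Pow A. \<Prod>x\<in>X. f x + f x)"
    by (simp add: prod_add[OF assms])
  also have "\<dots> = (\<Sum>X\<in>Pow A. \<Sum>Y\<in>Pow X. prod f Y * prod f (X - Y))"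
    using fin by (intro sum.cong refl) (simp add: prod_add)
  also have "\<dots> = (\<Sum>(X, Y)\<in>Sigma (Pow A) Pow. prod f Y * prod f (X - Y))"
    using fin by (intro sum.Sigma) (auto intro: finite_subset assms)
  also have "\<dots> = (\<Sum>(B1, B2)\<in>disjoint_subset_pairs A. prod f B1 * prod f B2)"
    by (rule sum.reindex_bij_witness[where j = "\<lambda>(X, Y). (Y, X - Y)" and i = "\<lambda>(B1, B2). (B1 \<union> B2, B1)"])
      (auto simp: disjoint_subset_pairs_def)
  finally show ?thesis .
qed

definition coprime_squarefree_pairs :: "nat set \<Rightarrow> (nat \<times> nat) set" where
  "coprime_squarefree_pairs P = {(d1, d2). squarefree d1 \<and> squarefree d2 \<and> coprime d1 d2
     \<and> prime_factors d1 \<subseteq> P \<and> prime_factors d2 \<subseteq> P}"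

lemma bij_betw_disjoint_subset_pairs_coprime_squarefree_pairs:
  assumes "finite P" and "\<forall>p\<in>P. prime p"
  shows "bij_betw (\<lambda>(B1, B2). (\<Prod>B1, \<Prod>B2)) (disjoint_subset_pairs P) (coprime_squarefree_pairs P)"
proof (rule bij_betw_byWitness[where f' = "\<lambda>(d1, d2). (prime_factors d1, prime_factors d2)"])
  have primes: "finite B \<and> (\<forall>p\<in>B. prime p)" if "B \<subseteq> P" for B
    using that assms finite_subset by blast
  show "\<forall>b\<in>disjoint_subset_pairs P. (\<lambda>(d1, d2). (prime_factors d1, prime_factors d2))
      ((\<lambda>(B1, B2). (\<Prod>B1, \<Prod>B2)) b) = b"
    using primes prime_factors_prod_primes by (auto simp: disjoint_subset_pairs_def)
  show "(\<lambda>(B1, B2). (\<Prod>B1, \<Prod>B2)) ` disjoint_subset_pairs P \<subseteq> coprime_squarefree_pairs P"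
  proof (rule image_subsetI)
    fix b assume "b \<in> disjoint_subset_pairs P"
    then obtain B1 B2 where b: "b = (B1, B2)" "B1 \<subseteq> P" "B2 \<subseteq> P" "B1 \<inter> B2 = {}"
      by (auto simp: disjoint_subset_pairs_def)
    have "\<forall>p\<in>B1 \<union> B2. prime p"
      using b assms(2) by blast
    then show "(\<lambda>(B1, B2). (\<Prod>B1, \<Prod>B2)) b \<in> coprime_squarefree_pairs P"
      using b primes[OF b(2)] primes[OF b(3)]
      by (simp add: coprime_squarefree_pairs_def prime_factors_prod_primes squarefree_prod_primes
          coprime_prod_primes_if_disjoint)
  qed
  show "\<forall>d\<in>coprime_squarefree_pairs P. (\<lambda>(B1, B2). (\<Prod>B1, \<Prod>B2))
      ((\<lambda>(d1, d2). (prime_factors d1, prime_factors d2)) d) = d"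
    by (auto simp: coprime_squarefree_pairs_def prod_prime_factors_squarefree)
  show "(\<lambda>(d1, d2). (prime_factors d1, prime_factors d2)) ` coprime_squarefree_pairs P
      \<subseteq> disjoint_subset_pairs P"
    by (auto simp: coprime_squarefree_pairs_def disjoint_subset_pairs_def
        dest: prime_factors_disjoint_if_coprime)
qed

lemma finite_coprime_squarefree_pairs:
  assumes "finite P" and "\<forall>p\<in>P. prime p"
  shows "finite (coprime_squarefree_pairs P)"
  using bij_betw_finite[OF bij_betw_disjoint_subset_pairs_coprime_squarefree_pairs[OF assms]]
    finite_disjoint_subset_pairs[OF assms(1)] by simp

lemma prod_primes_eq_sum_coprime_squarefree_pairs:
  assumes "finite P" and "\<forall>p\<in>P. prime p"
  shows "(\<Prod>p\<in>P. 1 - 2 / real p ^ l)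
    = (\<Sum>(d1, d2)\<in>coprime_squarefree_pairs P. moebius_pair_weight l d1 d2)"
proof -
  let ?f = "\<lambda>p. - 1 / real p ^ l"
  have "(\<Prod>p\<in>P. 1 - 2 / real p ^ l) = (\<Prod>p\<in>P. 1 + 2 * ?f p)"
    by simp
  also have "\<dots> = (\<Sum>(B1, B2)\<in>disjoint_subset_pairs P. prod ?f B1 * prod ?f B2)"
    by (rule prod_one_plus_double_eq_sum_disjoint_subset_pairs[OF assms(1)])
  also have "\<dots> = (\<Sum>(B1, B2)\<in>disjoint_subset_pairs P. moebius_pair_weight l (\<Prod>B1) (\<Prod>B2))"
  proof (intro sum.cong refl, clarify)
    fix B1 B2 assume "(B1, B2) \<in> disjoint_subset_pairs P"
    then have "B1 \<subseteq> P" "B2 \<subseteq> P"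
      by (auto simp: disjoint_subset_pairs_def)
    then show "prod ?f B1 * prod ?f B2 = moebius_pair_weight l (\<Prod>B1) (\<Prod>B2)"
      using assms by (intro moebius_pair_weight_prod_primes[symmetric]) (auto intro: finite_subset)
  qed
  also have "\<dots> = (\<Sum>(d1, d2)\<in>coprime_squarefree_pairs P. moebius_pair_weight l d1 d2)"
    using sum.reindex_bij_betw[OF bij_betw_disjoint_subset_pairs_coprime_squarefree_pairs[OF assms],
        of "case_prod (moebius_pair_weight l)"]
    by (simp add: case_prod_unfold)
  finally show ?thesis .
qed

lemma prod_primes_upto_tendsto_euler_product:
  assumes "l \<ge> 2"
  shows "(\<lambda>N. \<Prod>p\<in>{p. prime p \<and> p \<le> N}. 1 - 2 / real p ^ l)
     \<longlonglongrightarrow> (\<Prod>p. if prime p then 1 - 2 / real p ^ l else 1)"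
proof -
  let ?f = "\<lambda>p::nat. if prime p then 1 - 2 / real p ^ l else 1"
  have "summable (\<lambda>p. 2 * inverse (real p ^ l))"
    using inverse_power_summable[of l] assms by (intro summable_mult) simp
  moreover have "norm (norm (?f p - 1)) \<le> 2 * inverse (real p ^ l)" for p
    by (simp add: divide_inverse)
  ultimately have "summable (\<lambda>p. norm (?f p - 1))"
    by (rule summable_comparison_test')
  then have "convergent_prod ?f"
    by (intro abs_convergent_prod_imp_convergent_prod summable_imp_abs_convergent_prod)
  moreover have "(\<Prod>p\<in>{p. prime p \<and> p \<le> N}. 1 - 2 / real p ^ l) = (\<Prod>p\<le>N. ?f p)" for N
  proof -
    have "{p. prime p \<and> p \<le> N} = {p\<in>{..N}. prime p}"
      by auto
    then show ?thesis
      by (simp only:) (rule prod.inter_filter, simp)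
  qed
  ultimately show ?thesis
    using convergent_prod_LIMSEQ by simp
qed

section \<open>Rankin's trick\<close>

lemma sum_pairs_mult_le_suminf_squared:
  fixes a :: "nat \<Rightarrow> real" and S :: "(nat \<times> nat) set"
  assumes "\<And>k. a k \<ge> 0" and "summable a" and "finite S"
  shows "(\<Sum>(x, y)\<in>S. a x * a y) \<le> (\<Sum>k. a k)\<^sup>2"
proof -
  have "(\<Sum>(x, y)\<in>S. a x * a y) \<le> (\<Sum>(x, y)\<in>fst ` S \<times> snd ` S. a x * a y)"
    using assms by (intro sum_mono2) (auto simp: rev_image_eqI)
  also have "\<dots> = (\<Sum>x\<in>fst ` S. a x) * (\<Sum>y\<in>snd ` S. a y)"
    by (simp add: sum.cartesian_product sum_product)
  also have "\<dots> \<le> (\<Sum>k. a k) * (\<Sum>k. a k)"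
    using assms by (intro mult_mono sum_le_suminf suminf_nonneg sum_nonneg) auto
  finally show ?thesis
    by (simp add: power2_eq_square)
qed

text \<open>This is \<open>\<zeta>(1 + \<delta>)^2\<close>: the \<open>k = 0\<close> term vanishes because \<open>0 powr _ = 0\<close>.\<close>

definition rankin_constant :: "real \<Rightarrow> real" where
  "rankin_constant \<delta> = (\<Sum>k. real k powr - (1 + \<delta>))\<^sup>2"

lemma rankin_constant_nonneg: "rankin_constant \<delta> \<ge> 0"
  by (simp add: rankin_constant_def)

lemma sum_pairs_powr_le_rankin_constant:
  assumes "\<delta> > 0" and "finite S"
  shows "(\<Sum>(d1, d2)\<in>S. real (d1 * d2) powr - (1 + \<delta>)) \<le> rankin_constant \<delta>"
proof -
  have "summable (\<lambda>k. real k powr - (1 + \<delta>))"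
    using assms(1) by (simp add: summable_real_powr_iff)
  then show ?thesis
    unfolding rankin_constant_def
    using sum_pairs_mult_le_suminf_squared[of "\<lambda>k. real k powr - (1 + \<delta>)", OF _ _ assms(2)]
    by (simp add: powr_mult)
qed

lemma inverse_power_le_powr_if_le:
  fixes m x \<delta> :: real
  assumes "1 \<le> m" and "m \<le> x" and "k \<ge> 1" and "\<delta> > 0"
  shows "1 / m ^ k \<le> x powr \<delta> * m powr - (1 + \<delta>)"
proof -
  have "1 / m ^ k \<le> 1 / m ^ 1"
    using assms by (intro divide_left_mono power_increasing) auto
  also have "\<dots> = m powr \<delta> * m powr - (1 + \<delta>)"
    using assms(1) by (simp add: powr_add[symmetric] powr_minus_divide)
  also have "\<dots> \<le> x powr \<delta> * m powr - (1 + \<delta>)"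
    using assms by (intro mult_right_mono powr_mono2) auto
  finally show ?thesis .
qed

lemma inverse_power_le_powr_if_ge:
  fixes m x \<delta> :: real
  assumes "1 \<le> x" and "x \<le> m" and "k \<ge> 2" and "\<delta> > 0" and "\<delta> \<le> 1"
  shows "1 / m ^ k \<le> x powr (\<delta> - 1) * m powr - (1 + \<delta>)"
proof -
  have "1 / m ^ k \<le> 1 / m ^ 2"
    using assms by (intro divide_left_mono power_increasing) auto
  also have "\<dots> = m powr (\<delta> - 1) * m powr - (1 + \<delta>)"
    using assms by (simp add: powr_add[symmetric] powr_minus_divide powr_realpow)
  also have "\<dots> \<le> x powr (\<delta> - 1) * m powr - (1 + \<delta>)"
    using assms by (intro mult_right_mono powr_mono2') auto
  finally show ?thesis .
qed

section \<open>The error estimate\<close>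

lemma abs_sum_count_weight_minus_main_term_le:
  assumes "l \<ge> 2" and "\<delta> > 0"
  shows "\<bar>(\<Sum>(d1, d2)\<in>coprime_pairs_upto n.
            real (consecutive_divisor_count n d1 d2) * moebius_pair_weight (l - 1) d1 d2)
         - real n * (\<Sum>(d1, d2)\<in>coprime_pairs_upto n. moebius_pair_weight l d1 d2)\<bar>
    \<le> 2 * rankin_constant \<delta> * real n powr \<delta>"
proof -
  let ?w = "moebius_pair_weight (l - 1)"
  let ?a = "\<lambda>d1 d2. real (d1 * d2) powr - (1 + \<delta>)"
  have weight: "real n * moebius_pair_weight l d1 d2 = ?w d1 d2 * (real n / real (d1 * d2))" for d1 d2
    using assms(1) moebius_pair_weight_Suc[of "l - 1" d1 d2] by (simp add: Suc_diff_Suc numeral_2_eq_2)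
  have term_le: "\<bar>?w d1 d2 * (real (consecutive_divisor_count n d1 d2) - real n / real (d1 * d2))\<bar>
      \<le> 2 * real n powr \<delta> * ?a d1 d2"
    if "(d1, d2) \<in> coprime_pairs_upto n" for d1 d2
  proof -
    have d: "coprime d1 d2" "d1 \<ge> 1" "d2 \<ge> 1" "d1 * d2 \<le> n"
      using that by (auto simp: coprime_pairs_upto_def)
    have "1 \<le> d1 * d2"
      using d by simp
    then have "1 \<le> real (d1 * d2)" "real (d1 * d2) \<le> real n"
      using d(4) by (simp_all flip: of_nat_mult)
    then have "1 / real (d1 * d2) ^ (l - 1) \<le> real n powr \<delta> * ?a d1 d2"
      using assms by (intro inverse_power_le_powr_if_le) auto
    then have "\<bar>?w d1 d2\<bar> \<le> real n powr \<delta> * ?a d1 d2"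
      using abs_moebius_pair_weight_le order_trans by blast
    then have "\<bar>?w d1 d2\<bar> * \<bar>real (consecutive_divisor_count n d1 d2) - real n / real (d1 * d2)\<bar>
        \<le> real n powr \<delta> * ?a d1 d2 * 2"
      using abs_consecutive_divisor_count_minus_le_2[OF d(1-3), of n] by (intro mult_mono) auto
    then show ?thesis
      unfolding abs_mult by (simp only: mult_ac)
  qed
  have "\<bar>(\<Sum>(d1, d2)\<in>coprime_pairs_upto n. real (consecutive_divisor_count n d1 d2) * ?w d1 d2)
         - real n * (\<Sum>(d1, d2)\<in>coprime_pairs_upto n. moebius_pair_weight l d1 d2)\<bar>
      = \<bar>\<Sum>(d1, d2)\<in>coprime_pairs_upto n.
           ?w d1 d2 * (real (consecutive_divisor_count n d1 d2) - real n / real (d1 * d2))\<bar>"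
    by (simp add: sum_distrib_left weight sum_subtractf[symmetric] case_prod_unfold algebra_simps)
  also have "\<dots> \<le> (\<Sum>(d1, d2)\<in>coprime_pairs_upto n. 2 * real n powr \<delta> * ?a d1 d2)"
    using term_le by (intro order.trans[OF sum_abs] sum_mono) auto
  also have "\<dots> = 2 * real n powr \<delta> * (\<Sum>(d1, d2)\<in>coprime_pairs_upto n. ?a d1 d2)"
    by (simp add: sum_distrib_left case_prod_unfold)
  also have "\<dots> \<le> 2 * real n powr \<delta> * rankin_constant \<delta>"
    using assms(2) finite_coprime_pairs_upto
    by (intro mult_left_mono sum_pairs_powr_le_rankin_constant) auto
  finally show ?thesis
    by (simp add: mult_ac)
qed

lemma sum_coprime_pairs_upto_eq_sum_coprime_squarefree_pairs:
  assumes "n \<le> N"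
  shows "(\<Sum>(d1, d2)\<in>coprime_pairs_upto n. moebius_pair_weight l d1 d2)
    = (\<Sum>(d1, d2)\<in>{(d1, d2)\<in>coprime_squarefree_pairs {p. prime p \<and> p \<le> N}. d1 * d2 \<le> n}.
        moebius_pair_weight l d1 d2)"
proof (rule sum.mono_neutral_right[OF finite_coprime_pairs_upto])
  let ?E = "coprime_squarefree_pairs {p. prime p \<and> p \<le> N}"
  show "{(d1, d2)\<in>?E. d1 * d2 \<le> n} \<subseteq> coprime_pairs_upto n"
    by (auto simp: coprime_squarefree_pairs_def coprime_pairs_upto_def Suc_le_eq intro: gr0I)
  show "\<forall>d\<in>coprime_pairs_upto n - {(d1, d2)\<in>?E. d1 * d2 \<le> n}. case_prod (moebius_pair_weight l) d = 0"
  proof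
    fix d assume "d \<in> coprime_pairs_upto n - {(d1, d2)\<in>?E. d1 * d2 \<le> n}"
    then obtain d1 d2 where d_eq: "d = (d1, d2)" and "(d1, d2) \<notin> ?E"
      and d: "d1 \<ge> 1" "d2 \<ge> 1" "d1 * d2 \<le> n" "coprime d1 d2"
      by (auto simp: coprime_pairs_upto_def)
    show "case_prod (moebius_pair_weight l) d = 0"
    proof (rule ccontr)
      assume "case_prod (moebius_pair_weight l) d \<noteq> 0"
      then have sqf: "squarefree d1" "squarefree d2"
        by (auto simp: d_eq moebius_pair_weight_def squarefree_if_moebius_mu_nonzero)
      have "p \<le> N" if "p \<in> prime_factors d1 \<union> prime_factors d2" for p
      proof -
        have "p \<le> d1 \<or> p \<le> d2"
          using that d by (auto intro: dvd_imp_le simp: in_prime_factors_iff)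
        then show ?thesis
          using factors_le_if_mult_le[OF d(1-3)] assms by linarith
      qed
      then have "(d1, d2) \<in> ?E"
        using sqf d(4) by (auto simp: coprime_squarefree_pairs_def in_prime_factors_iff)
      with \<open>(d1, d2) \<notin> ?E\<close> show False
        by contradiction
    qed
  qed
qed

lemma abs_sum_weight_minus_prod_primes_le:
  assumes "l \<ge> 2" and "\<delta> > 0" and "\<delta> \<le> 1" and "1 \<le> n" and "n \<le> N"
  shows "\<bar>(\<Sum>(d1, d2)\<in>coprime_pairs_upto n. moebius_pair_weight l d1 d2)
          - (\<Prod>p\<in>{p. prime p \<and> p \<le> N}. 1 - 2 / real p ^ l)\<bar>
    \<le> rankin_constant \<delta> * real n powr (\<delta> - 1)"
proof -
  define E where "E = coprime_squarefree_pairs {p. prime p \<and> p \<le> N}"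
  let ?w = "case_prod (moebius_pair_weight l)"
  let ?a = "\<lambda>(d1, d2). real (d1 * d2) powr - (1 + \<delta>)"
  have fin: "finite E"
    unfolding E_def by (rule finite_coprime_squarefree_pairs) auto
  have "(\<Prod>p\<in>{p. prime p \<and> p \<le> N}. 1 - 2 / real p ^ l) = sum ?w E"
    unfolding E_def by (rule prod_primes_eq_sum_coprime_squarefree_pairs) auto
  also have "\<dots> = sum ?w {d\<in>E. fst d * snd d \<le> n} + sum ?w {d\<in>E. n < fst d * snd d}"
    using fin by (subst sum.union_disjoint[symmetric]) (auto intro: sum.cong)
  also have "sum ?w {d\<in>E. fst d * snd d \<le> n} = (\<Sum>(d1, d2)\<in>coprime_pairs_upto n. moebius_pair_weight l d1 d2)"
    using sum_coprime_pairs_upto_eq_sum_coprime_squarefree_pairs[OF assms(5), of l]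
    by (simp add: E_def case_prod_unfold)
  finally have "\<bar>(\<Sum>(d1, d2)\<in>coprime_pairs_upto n. moebius_pair_weight l d1 d2)
          - (\<Prod>p\<in>{p. prime p \<and> p \<le> N}. 1 - 2 / real p ^ l)\<bar> = \<bar>sum ?w {d\<in>E. n < fst d * snd d}\<bar>"
    by simp
  also have "\<dots> \<le> (\<Sum>d\<in>{d\<in>E. n < fst d * snd d}. real n powr (\<delta> - 1) * ?a d)"
  proof (rule order.trans[OF sum_abs], rule sum_mono)
    fix d assume "d \<in> {d\<in>E. n < fst d * snd d}"
    then obtain d1 d2 where d_eq: "d = (d1, d2)" and "n < d1 * d2"
      by (cases d) auto
    then have "1 \<le> real n" "real n \<le> real (d1 * d2)"
      using assms(4) by (simp_all flip: of_nat_mult)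
    then have "1 / real (d1 * d2) ^ l \<le> real n powr (\<delta> - 1) * real (d1 * d2) powr - (1 + \<delta>)"
      using assms by (intro inverse_power_le_powr_if_ge) auto
    then have "\<bar>moebius_pair_weight l d1 d2\<bar> \<le> real n powr (\<delta> - 1) * real (d1 * d2) powr - (1 + \<delta>)"
      by (rule order_trans[OF abs_moebius_pair_weight_le])
    then show "\<bar>?w d\<bar> \<le> real n powr (\<delta> - 1) * ?a d"
      by (simp add: d_eq)
  qed
  also have "\<dots> = real n powr (\<delta> - 1) * (\<Sum>(d1, d2)\<in>{d\<in>E. n < fst d * snd d}. real (d1 * d2) powr - (1 + \<delta>))"
    by (simp add: sum_distrib_left case_prod_unfold)
  also have "\<dots> \<le> real n powr (\<delta> - 1) * rankin_constant \<delta>"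
    using fin assms(2) by (intro mult_left_mono sum_pairs_powr_le_rankin_constant) auto
  finally show ?thesis
    by (simp add: mult.commute)
qed

lemma abs_sum_consecutive_divisor_pairs_minus_euler_product_le:
  assumes "l \<ge> 2" and "\<delta> > 0" and "\<delta> \<le> 1" and "1 \<le> n"
  shows "\<bar>(\<Sum>i\<in>{1..n}. \<Sum>(d1, d2)\<in>{(d1, d2). d1 \<ge> 1 \<and> d2 \<ge> 1 \<and> d1 * d2 \<le> i
              \<and> d1 dvd i \<and> d2 dvd (i + 1) \<and> coprime d1 d2}. moebius_pair_weight (l - 1) d1 d2)
          - real n * (\<Prod>p. if prime p then 1 - 2 / real p ^ l else 1)\<bar>
    \<le> 3 * rankin_constant \<delta> * real n powr \<delta>"
proof -
  define S where "S = (\<Sum>(d1, d2)\<in>coprime_pairs_upto n.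
      real (consecutive_divisor_count n d1 d2) * moebius_pair_weight (l - 1) d1 d2)"
  define T where "T = (\<Sum>(d1, d2)\<in>coprime_pairs_upto n. moebius_pair_weight l d1 d2)"
  have truncated: "\<bar>S - real n * (\<Prod>p\<in>{p. prime p \<and> p \<le> N}. 1 - 2 / real p ^ l)\<bar>
      \<le> 3 * rankin_constant \<delta> * real n powr \<delta>" if "n \<le> N" for N
  proof -
    let ?P = "\<Prod>p\<in>{p. prime p \<and> p \<le> N}. 1 - 2 / real p ^ l"
    have "\<bar>S - real n * ?P\<bar> = \<bar>(S - real n * T) + real n * (T - ?P)\<bar>"
      by (simp add: algebra_simps)
    also have "\<dots> \<le> \<bar>S - real n * T\<bar> + real n * \<bar>T - ?P\<bar>"
      using abs_triangle_ineq[of "S - real n * T" "real n * (T - ?P)"] by (simp add: abs_mult)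
    also have "\<dots> \<le> 2 * rankin_constant \<delta> * real n powr \<delta> + real n * (rankin_constant \<delta> * real n powr (\<delta> - 1))"
    proof (rule add_mono)
      show "\<bar>S - real n * T\<bar> \<le> 2 * rankin_constant \<delta> * real n powr \<delta>"
        unfolding S_def T_def using assms(1,2) by (rule abs_sum_count_weight_minus_main_term_le)
      show "real n * \<bar>T - ?P\<bar> \<le> real n * (rankin_constant \<delta> * real n powr (\<delta> - 1))"
        unfolding T_def using assms that
        by (intro mult_left_mono abs_sum_weight_minus_prod_primes_le) auto
    qed
    also have "\<dots> = 3 * rankin_constant \<delta> * real n powr \<delta>"
    proof -
      have "real n * real n powr (\<delta> - 1) = real n powr \<delta>"
        using assms(4) by (simp add: powr_diff)
      then show ?thesis
        by (simp add: algebra_simps)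
    qed
    finally show ?thesis .
  qed
  have "(\<lambda>N. \<bar>S - real n * (\<Prod>p\<in>{p. prime p \<and> p \<le> N}. 1 - 2 / real p ^ l)\<bar>)
      \<longlonglongrightarrow> \<bar>S - real n * (\<Prod>p. if prime p then 1 - 2 / real p ^ l else 1)\<bar>"
    using assms(1) by (intro tendsto_intros prod_primes_upto_tendsto_euler_product)
  then have "\<bar>S - real n * (\<Prod>p. if prime p then 1 - 2 / real p ^ l else 1)\<bar>
      \<le> 3 * rankin_constant \<delta> * real n powr \<delta>"
    by (rule Lim_bounded[where M = n]) (use truncated in blast)
  then show ?thesis
    by (simp only: S_def sum_consecutive_divisor_pairs_swap)
qed

theorem lemma2p9:
  fixes l :: nat and \<epsilon> :: real
  assumes "l \<ge> 2" and "\<epsilon> > 0"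
  shows "(\<lambda>n::nat.
      (\<Sum>i\<in>{1..n}. \<Sum>(d1, d2)\<in>{(d1, d2). d1 \<ge> 1 \<and> d2 \<ge> 1 \<and> d1 * d2 \<le> i
              \<and> d1 dvd i \<and> d2 dvd (i + 1) \<and> coprime d1 d2}.
          real_of_int (moebius_mu d1 * moebius_mu d2) / real (d1 * d2) ^ (l - 1))
      - real n * (\<Prod>p. if prime p then 1 - 2 / real p ^ l else 1))
    \<in> O(\<lambda>n. real n powr \<epsilon>)"
proof -
  define \<delta> where "\<delta> = min \<epsilon> 1"
  have \<delta>: "\<delta> > 0" "\<delta> \<le> 1" "\<delta> \<le> \<epsilon>"
    using assms(2) by (auto simp: \<delta>_def)
  let ?err = "\<lambda>n::nat. (\<Sum>i\<in>{1..n}. \<Sum>(d1, d2)\<in>{(d1, d2). d1 \<ge> 1 \<and> d2 \<ge> 1 \<and> d1 * d2 \<le> i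
              \<and> d1 dvd i \<and> d2 dvd (i + 1) \<and> coprime d1 d2}. moebius_pair_weight (l - 1) d1 d2)
          - real n * (\<Prod>p. if prime p then 1 - 2 / real p ^ l else 1)"
  have bound: "norm (?err n) \<le> 3 * rankin_constant \<delta> * norm (real n powr \<epsilon>)" if "n \<ge> 1" for n
  proof -
    have "norm (?err n) \<le> 3 * rankin_constant \<delta> * real n powr \<delta>"
      unfolding real_norm_def using assms(1) \<delta>(1,2) that
      by (rule abs_sum_consecutive_divisor_pairs_minus_euler_product_le)
    also have "\<dots> \<le> 3 * rankin_constant \<delta> * norm (real n powr \<epsilon>)"
      using that \<delta>(3) rankin_constant_nonneg by (intro mult_left_mono) (auto intro: powr_mono)
    finally show ?thesis .
  qed
  have "?err \<in> O(\<lambda>n. real n powr \<epsilon>)"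
    using bound by (intro bigoI eventually_mono[OF eventually_ge_at_top[of 1]])
  then show ?thesis
    unfolding moebius_pair_weight_def .
qed

end
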